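(* Let $G=(g_1,\dots,g_k)\in\mathbb{N}_0^k$ be telescopic with $g_1>0$ and $c(G)=(c_2,\dots,c_k)$, and suppose $g_n=c_mg_m$ for some $m,n$ with $1<n<m\le k$. Then the sequence $$H=(g_1,\dots,g_{n-1},\,g_m,\,g_{n+1},\dots,g_{m-1},\,g_{m+1},\dots,g_k)\in\mathbb{N}_0^{k-1}$$ (obtained by swapping the $n$th and $m$th entries of $G$ and then deleting the $m$th entry) is telescopic and satisfies $\langle H\rangle=\langle G\rangle$.
   Context: $\langle\cdot\rangle$ denotes the set of $\mathbb{N}_0$-linear combinations. $G_i=(g_1,\dots,g_i)$, $d_i=\gcd(G_i)$, $c_j=d_{j-1}/d_j$; a sequence $G$ with $g_1>0$ is telescopic if $c_jg_j\in\langle G_{j-1}\rangle$ for all $2\le j\le k$. *)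

theory Defs
  imports Main
begin

text \<open>Sequences G = (g_1,...,g_k) are lists of naturals; g_i = G ! (i-1).\<close>

definition semigrp :: "nat list \<Rightarrow> nat set" where
  "semigrp G = {\<Sum>i<length G. a i * G ! i | a :: nat \<Rightarrow> nat. True}"

definition dseq :: "nat list \<Rightarrow> nat \<Rightarrow> nat" where
  "dseq G i = Gcd (set (take i G))"

definition cseq :: "nat list \<Rightarrow> nat \<Rightarrow> nat" where
  "cseq G j = dseq G (j - 1) div dseq G j"

definition telescopic :: "nat list \<Rightarrow> bool" where
  "telescopic G \<longleftrightarrow> G \<noteq> [] \<and> G ! 0 > 0 \<and>
     (\<forall>j. 2 \<le> j \<and> j \<le> length G \<longrightarrow> cseq G j * G ! (j - 1) \<in> semigrp (take (j - 1) G))"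

end

theory Submission
  imports Defs "HOL-Computational_Algebra.Primes"
begin

text \<open>
  The key identity is c_j g_j = lcm(d_{j-1}, g_j), so the hypothesis says g_n = lcm(d, g_m) with
  d = d_{m-1}. Hence g_m divides g_n and g_n lies in the semigroup generated by g_m: exchanging g_n
  for g_m preserves the semigroup, and every prefix of H is a prefix of G up to this exchange
  (and the deletion of the now repeated g_m). The numbers lcm(d_{j-1}, h_j) of H coincide with the
  corresponding numbers of G. The only non-trivial case is a prefix of H that contains g_m
  instead of g_n but ends before position m. There the prefix gcds D of H and E of G may differ,
  but D divides E, gcd(E, g_m) divides D, and distributivity of the divisor lattice gives
  E = gcd(E, lcm(d, g_m)) = lcm(d, gcd(E, g_m)); so D and E have the same lcm with the next
  entry, which is a multiple of d.
\<close>

inductive_set add_closure :: "nat set \<Rightarrow> nat set" for A where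
  zero: "0 \<in> add_closure A"
| add: "a \<in> A \<Longrightarrow> x \<in> add_closure A \<Longrightarrow> a + x \<in> add_closure A"

lemma add_closure_add: "x \<in> add_closure A \<Longrightarrow> y \<in> add_closure A \<Longrightarrow> x + y \<in> add_closure A"
  by (induction x rule: add_closure.induct) (auto simp: add.assoc intro: add_closure.intros)

lemma add_closure_base: "a \<in> A \<Longrightarrow> a \<in> add_closure A"
  using add_closure.add[OF _ add_closure.zero, of a A] by simp

lemma add_closure_mult: "x \<in> add_closure A \<Longrightarrow> k * x \<in> add_closure A"
  by (induction k) (auto intro: add_closure_add add_closure.zero)

lemma add_closure_sum: "(\<And>i. i \<in> I \<Longrightarrow> f i \<in> add_closure A) \<Longrightarrow> sum f I \<in> add_closure A"
  by (induction I rule: infinite_finite_induct) (auto intro: add_closure_add add_closure.zero)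

lemma add_closure_least:
  assumes "A \<subseteq> add_closure B"
  shows "add_closure A \<subseteq> add_closure B"
proof
  fix x assume "x \<in> add_closure A"
  then show "x \<in> add_closure B"
    by (induction x rule: add_closure.induct)
      (use assms in \<open>auto intro: add_closure.zero add_closure_add\<close>)
qed

lemma add_closure_subset_insert:
  "A \<subseteq> insert x B \<Longrightarrow> x \<in> add_closure B \<Longrightarrow> add_closure A \<subseteq> add_closure B"
  by (rule add_closure_least) (auto intro: add_closure_base)

lemma semigrp_eq_add_closure: "semigrp L = add_closure (set L)"
proof
  show "semigrp L \<subseteq> add_closure (set L)"
    unfolding semigrp_def
    by (auto intro: add_closure_sum add_closure_mult[OF add_closure_base[OF nth_mem]])
  show "add_closure (set L) \<subseteq> semigrp L"
  proof
    fix x assume "x \<in> add_closure (set L)"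
    then show "x \<in> semigrp L"
    proof (induction x rule: add_closure.induct)
      case zero
      show ?case unfolding semigrp_def by (auto intro!: exI[of _ "\<lambda>_. 0"])
    next
      case (add a x)
      from add.IH obtain b where b: "x = (\<Sum>i<length L. b i * L ! i)"
        unfolding semigrp_def by auto
      from add.hyps obtain i where i: "i < length L" "a = L ! i"
        by (auto simp: in_set_conv_nth)
      have "(\<Sum>t<length L. (b(i := b i + 1)) t * L ! t)
            = (\<Sum>t<length L. b t * L ! t + (if t = i then L ! i else 0))"
        by (rule sum.cong) auto
      also have "\<dots> = a + x"
        using i b by (simp add: sum.distrib)
      finally show ?case
        unfolding semigrp_def by (auto intro!: exI[of _ "b(i := b i + 1)"])
    qed
  qed
qed

lemma dvd_lcm_gcd_if_dvd_lcm:
  fixes a b c :: nat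
  assumes "b dvd a" "a dvd lcm b c"
  shows "a dvd lcm b (gcd a c)"
proof -
  have "a = gcd a (lcm b c)"
    using assms(2) by (simp add: gcd_nat.absorb1)
  also have "\<dots> = lcm b (gcd a c)"
    using assms(1) by (simp add: gcd_lcm_distrib gcd_nat.absorb2)
  finally show ?thesis by simp
qed

lemma lcm_eq_lcm_if_gcd_bounds:
  fixes D E d g y :: nat
  assumes "D dvd E" "gcd E y dvd D" "d dvd E" "d dvd g" "E dvd lcm d y"
  shows "lcm D g = lcm E g"
proof (rule dvd_antisym)
  show "lcm D g dvd lcm E g"
    using assms(1) by (meson dvd_lcm1 dvd_lcm2 dvd_trans lcm_least)
  have "E dvd lcm d (gcd E y)"
    using assms(3,5) by (rule dvd_lcm_gcd_if_dvd_lcm)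
  also have "lcm d (gcd E y) dvd lcm D g"
    using assms(2,4) by (meson dvd_lcm1 dvd_lcm2 dvd_trans lcm_least)
  finally show "lcm E g dvd lcm D g"
    by simp
qed

lemma gcd_Gcd_dvd_Gcd_if_subset_insert:
  fixes A B :: "nat set"
  assumes "A \<subseteq> insert x B"
  shows "gcd x (Gcd B) dvd Gcd A"
  using assms by (intro Gcd_greatest) (auto intro: dvd_trans[OF gcd_dvd2 Gcd_dvd])

lemma dseq_Suc: "i < length G \<Longrightarrow> dseq G (Suc i) = gcd (dseq G i) (G ! i)"
  by (simp add: dseq_def take_Suc_conv_app_nth gcd.commute)

lemma dseq_dvd_nth: "i < j \<Longrightarrow> i < length G \<Longrightarrow> dseq G j dvd G ! i"
  unfolding dseq_def by (rule Gcd_dvd) (auto simp: in_set_conv_nth)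

lemma dseq_antimono:
  assumes "i \<le> j"
  shows "dseq G j dvd dseq G i"
  unfolding dseq_def
proof (rule Gcd_greatest)
  fix x assume "x \<in> set (take i G)"
  then have "x \<in> set (take j G)"
    by (rule subsetD[OF set_take_subset_set_take[OF assms]])
  then show "Gcd (set (take j G)) dvd x"
    by (rule Gcd_dvd)
qed

lemma cseq_mult_nth_eq_lcm:
  "i < length G \<Longrightarrow> cseq G (Suc i) * G ! i = lcm (dseq G i) (G ! i)"
  by (simp add: cseq_def dseq_Suc lcm_nat_def dvd_div_mult)

lemma telescopic_iff_lcm:
  "telescopic G \<longleftrightarrow> G \<noteq> [] \<and> 0 < G ! 0 \<and>
     (\<forall>i. 1 \<le> i \<and> i < length G \<longrightarrow> lcm (dseq G i) (G ! i) \<in> add_closure (set (take i G)))"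
  (is "_ \<longleftrightarrow> _ \<and> _ \<and> ?lcm")
proof -
  have "(\<forall>j. 2 \<le> j \<and> j \<le> length G \<longrightarrow> cseq G j * G ! (j - 1) \<in> semigrp (take (j - 1) G))
        \<longleftrightarrow> ?lcm"
  proof (intro iffI allI impI)
    fix i assume "\<forall>j. 2 \<le> j \<and> j \<le> length G \<longrightarrow> cseq G j * G ! (j - 1) \<in> semigrp (take (j - 1) G)"
      and "1 \<le> i \<and> i < length G"
    then show "lcm (dseq G i) (G ! i) \<in> add_closure (set (take i G))"
      by (force simp: cseq_mult_nth_eq_lcm semigrp_eq_add_closure dest: spec[of _ "Suc i"])
  next
    fix j assume lcm: ?lcm and j: "2 \<le> j \<and> j \<le> length G"
    have "lcm (dseq G (j - 1)) (G ! (j - 1)) \<in> add_closure (set (take (j - 1) G))"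
      by (intro lcm[rule_format]) (use j in linarith)
    moreover have "cseq G j * G ! (j - 1) = lcm (dseq G (j - 1)) (G ! (j - 1))"
      using cseq_mult_nth_eq_lcm[of "j - 1" G] j by (cases j) auto
    ultimately show "cseq G j * G ! (j - 1) \<in> semigrp (take (j - 1) G)"
      by (simp add: semigrp_eq_add_closure)
  qed
  then show ?thesis
    unfolding telescopic_def by blast
qed

definition swap_delete :: "'a list \<Rightarrow> nat \<Rightarrow> nat \<Rightarrow> 'a list" where
  "swap_delete xs p q = (let ys = xs[p := xs ! q] in take q ys @ drop (Suc q) ys)"

context
  fixes xs :: "'a list" and p q :: nat
  assumes p_less_q: "p < q" and q_less: "q < length xs"
begin

lemma length_swap_delete: "length (swap_delete xs p q) = length xs - 1"
  using q_less by (simp add: swap_delete_def Let_def)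

lemma nth_swap_delete:
  "i < length xs - 1 \<Longrightarrow>
     swap_delete xs p q ! i = (if i = p then xs ! q else if i < q then xs ! i else xs ! Suc i)"
  using p_less_q q_less by (auto simp: swap_delete_def nth_append nth_list_update)

lemma take_swap_delete: "i \<le> p \<Longrightarrow> take i (swap_delete xs p q) = take i xs"
  using p_less_q q_less by (simp add: swap_delete_def Let_def)

lemma set_take_swap_delete:
  "set (take i (swap_delete xs p q)) = set (take (if i < q then i else Suc i) (xs[p := xs ! q]))"
proof (cases "i < q")
  case True
  then show ?thesis
    using q_less by (simp add: swap_delete_def Let_def)
next
  case False
  define ys where "ys = xs[p := xs ! q]"
  have drop_q: "drop q ys = ys ! q # drop (Suc q) ys"
    using q_less by (simp add: ys_def Cons_nth_drop_Suc)
  have "ys ! q \<in> set (take q ys)"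
    using p_less_q q_less by (auto simp: ys_def in_set_conv_nth intro!: exI[of _ p])
  moreover have "take (Suc i) ys = take q ys @ ys ! q # take (i - q) (drop (Suc q) ys)"
    using False drop_q take_add[of q "Suc i - q" ys] by (simp add: Suc_diff_le)
  moreover have "take i (swap_delete xs p q) = take q ys @ take (i - q) (drop (Suc q) ys)"
    using False q_less by (simp add: swap_delete_def ys_def Let_def)
  ultimately show ?thesis
    using False by (simp add: ys_def[symmetric] insert_absorb)
qed

end

lemma set_subset_insert_update: "set xs \<subseteq> insert (xs ! p) (set (xs[p := y]))"
  by (auto simp: in_set_conv_nth nth_list_update) (metis nth_list_update_neq)

locale lcm_exchange =
  fixes G :: "nat list" and p q :: nat
  assumes p_less_q: "p < q" and q_less: "q < length G"
    and nth_p_eq_lcm: "G ! p = lcm (dseq G q) (G ! q)"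
begin

abbreviation H :: "nat list" where
  "H \<equiv> swap_delete G p q"

text \<open>Entry \<open>i \<noteq> p\<close> of \<open>H\<close> is entry \<open>orig i\<close> of \<open>G\<close>, and the prefix of length \<open>i\<close> of \<open>H\<close>
  matches the prefix of length \<open>orig i\<close> of \<open>G\<close> up to exchanging \<open>G ! p\<close> for \<open>G ! q\<close>.\<close>

definition orig :: "nat \<Rightarrow> nat" where
  "orig i = (if i < q then i else Suc i)"

lemma length_H: "length H = length G - 1"
  using length_swap_delete[OF p_less_q q_less] .

lemma nth_H: "i < length H \<Longrightarrow> i \<noteq> p \<Longrightarrow> H ! i = G ! orig i"
  using nth_swap_delete[OF p_less_q q_less] length_H by (simp add: orig_def)

lemma nth_H_p: "H ! p = G ! q"
  using nth_swap_delete[OF p_less_q q_less] length_H p_less_q q_less by simp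

lemma nth_q_dvd_nth_p: "G ! q dvd G ! p"
  by (simp add: nth_p_eq_lcm)

lemma take_H_eq: "i \<le> p \<Longrightarrow> take i H = take i G"
  using take_swap_delete[OF p_less_q q_less] .

lemma orig_less_length: "i < length H \<Longrightarrow> orig i < length G"
  using length_H by (auto simp: orig_def)

context
  fixes i assumes p_less: "p < i" and i_le: "i \<le> length H"
begin

lemma set_take_H_eq: "set (take i H) = set (take (orig i) (G[p := G ! q]))"
  using set_take_swap_delete[OF p_less_q q_less] by (simp add: orig_def)

lemma orig_le: "orig i \<le> length G"
  using i_le length_H q_less by (auto simp: orig_def)

lemma p_less_orig: "p < orig i"
  using p_less by (simp add: orig_def)

lemma set_take_H_subset: "set (take i H) \<subseteq> insert (G ! q) (set (take (orig i) G))"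
  unfolding set_take_H_eq take_update_swap by (rule set_update_subset_insert)

lemma set_take_G_subset: "set (take (orig i) G) \<subseteq> insert (G ! p) (set (take i H))"
  using set_subset_insert_update[of "take (orig i) G" p "G ! q"] p_less_orig orig_le
  by (simp add: set_take_H_eq take_update_swap)

lemma nth_q_in_take_H: "G ! q \<in> set (take i H)"
  using p_less_orig orig_le
  by (simp add: set_take_H_eq take_update_swap set_update_memI)

lemma dseq_H_dvd: "dseq H i dvd dseq G (orig i)"
proof -
  have "dseq H i dvd G ! q"
    unfolding dseq_def using nth_q_in_take_H by (rule Gcd_dvd)
  also note nth_q_dvd_nth_p
  finally show ?thesis
    using gcd_Gcd_dvd_Gcd_if_subset_insert[OF set_take_G_subset]
    by (simp add: dseq_def gcd_nat.absorb2)
qed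

lemma gcd_dvd_dseq_H: "gcd (G ! q) (dseq G (orig i)) dvd dseq H i"
  using gcd_Gcd_dvd_Gcd_if_subset_insert[OF set_take_H_subset] by (simp add: dseq_def)

end

lemma add_closure_take_G_subset:
  assumes "i \<le> length H"
  shows "add_closure (set (take (orig i) G)) \<subseteq> add_closure (set (take i H))"
proof (cases "p < i")
  case True
  obtain c where "G ! p = G ! q * c"
    using nth_q_dvd_nth_p by (rule dvdE)
  then have "G ! p \<in> add_closure (set (take i H))"
    using nth_q_in_take_H[OF True assms]
    by (simp add: add_closure_mult add_closure_base mult.commute)
  then show ?thesis
    using set_take_G_subset[OF True assms] by (rule add_closure_subset_insert[rotated])
next
  case False
  then show ?thesis
    using take_H_eq p_less_q by (simp add: orig_def)
qed

lemma lcm_dseq_H_eq: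
  assumes i: "i < length H"
  shows "lcm (dseq H i) (H ! i) = lcm (dseq G (orig i)) (G ! orig i)"
proof -
  consider "i < p" | "i = p" | "p < i" "i < q" | "q \<le> i"
    using p_less_q by linarith
  then show ?thesis
  proof cases
    case 1
    then have "take i H = take i G"
      by (simp add: take_H_eq)
    then show ?thesis
      using 1 i p_less_q nth_H by (simp add: dseq_def orig_def)
  next
    case 2
    have "dseq G q dvd dseq G p"
      using p_less_q by (simp add: dseq_antimono)
    then have "lcm (dseq G p) (G ! p) = lcm (dseq G p) (G ! q)"
      by (simp add: nth_p_eq_lcm lcm.assoc[symmetric] lcm_proj1_if_dvd)
    then show ?thesis
      using 2 p_less_q by (simp add: nth_H_p take_H_eq dseq_def orig_def)
  next
    case 3
    then have orig: "orig i = i"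
      by (simp add: orig_def)
    have "lcm (dseq H i) (G ! i) = lcm (dseq G i) (G ! i)"
    proof (rule lcm_eq_lcm_if_gcd_bounds)
      show "dseq H i dvd dseq G i" "gcd (dseq G i) (G ! q) dvd dseq H i"
        using dseq_H_dvd[of i] gcd_dvd_dseq_H[of i] 3 i orig by (simp_all add: gcd.commute)
      show "dseq G q dvd dseq G i" "dseq G q dvd G ! i"
        using 3 q_less by (simp_all add: dseq_antimono dseq_dvd_nth)
      show "dseq G i dvd lcm (dseq G q) (G ! q)"
        using 3 q_less by (simp flip: nth_p_eq_lcm add: dseq_dvd_nth)
    qed
    then show ?thesis
      using 3 i orig nth_H by simp
  next
    case 4
    then have orig: "orig i = Suc i"
      by (simp add: orig_def)
    have "dseq G (Suc i) dvd G ! q"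
      using 4 q_less by (simp add: dseq_dvd_nth)
    then have "dseq G (Suc i) dvd dseq H i"
      using gcd_dvd_dseq_H[of i] 4 i p_less_q orig by (simp add: gcd_nat.absorb2)
    then have "dseq H i = dseq G (Suc i)"
      using dseq_H_dvd[of i] 4 i p_less_q orig by (simp add: dvd_antisym)
    then show ?thesis
      using 4 i p_less_q orig nth_H by simp
  qed
qed

lemma telescopic_H:
  assumes telescopic: "telescopic G"
  shows "telescopic H"
proof -
  have G0: "0 < G ! 0"
    using telescopic by (simp add: telescopic_iff_lcm)
  have "0 < H ! 0"
  proof (cases "p = 0")
    case True
    then show ?thesis
      using G0 nth_H_p nth_p_eq_lcm by (auto intro: Nat.gr0I)
  next
    case False
    then show ?thesis
      using G0 nth_H[of 0] length_H p_less_q q_less by (simp add: orig_def)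
  qed
  moreover have "0 < length H"
    using length_H p_less_q q_less by simp
  moreover have "lcm (dseq H i) (H ! i) \<in> add_closure (set (take i H))"
    if "1 \<le> i" "i < length H" for i
  proof -
    have "1 \<le> orig i" "orig i < length G"
      using that orig_less_length by (auto simp: orig_def)
    then have "lcm (dseq G (orig i)) (G ! orig i) \<in> add_closure (set (take (orig i) G))"
      using telescopic by (simp add: telescopic_iff_lcm)
    then show ?thesis
      using lcm_dseq_H_eq[of i] add_closure_take_G_subset[of i] that by auto
  qed
  ultimately show ?thesis
    by (simp add: telescopic_iff_lcm)
qed

lemma add_closure_H: "add_closure (set H) = add_closure (set G)"
proof
  have H_len: "p < length H" "orig (length H) = length G"
    using length_H p_less_q q_less by (auto simp: orig_def)
  show "add_closure (set G) \<subseteq> add_closure (set H)"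
    using add_closure_take_G_subset[of "length H"] H_len by simp
  have "set H \<subseteq> insert (G ! q) (set G)"
    using set_take_H_subset[of "length H"] H_len by simp
  moreover have "G ! q \<in> add_closure (set G)"
    using q_less by (simp add: add_closure_base)
  ultimately show "add_closure (set H) \<subseteq> add_closure (set G)"
    by (rule add_closure_subset_insert)
qed

end

theorem mainTheorem17:
  fixes G :: "nat list" and n m :: nat
  assumes "telescopic G"
    and "1 < n" and "n < m" and "m \<le> length G"
    and "G ! (n - 1) = cseq G m * G ! (m - 1)"
  shows "let G' = G[n - 1 := G ! (m - 1)]; H = take (m - 1) G' @ drop m G'
         in telescopic H \<and> semigrp H = semigrp G"
proof -
  have "G ! (n - 1) = lcm (dseq G (m - 1)) (G ! (m - 1))"
    using assms(3-5) cseq_mult_nth_eq_lcm[of "m - 1" G] by simp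
  then interpret lcm_exchange G "n - 1" "m - 1"
    using assms(2-4) by unfold_locales auto
  have "swap_delete G (n - 1) (m - 1)
        = take (m - 1) (G[n - 1 := G ! (m - 1)]) @ drop m (G[n - 1 := G ! (m - 1)])"
    using assms(3) by (simp add: swap_delete_def)
  then show ?thesis
    using telescopic_H[OF assms(1)] add_closure_H by (simp add: semigrp_eq_add_closure)
qed

end
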